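(* Let $G$ be an SE-graph, $\phi$ an $(I|J)$-flow and $\phi'$ an $(I'|J')$-flow in $G$, and let $P_1,\dots,P_k$ be the exchange paths of the double flow $(\phi,\phi')$. Then: (i) $k=(|I^\circ|+|I^\bullet|+|J^\circ|+|J^\bullet|)/2$; (ii) the set of endvertices of $P_1,\dots,P_k$ is $\{r_i:i\in I^\circ\cup I^\bullet\}\cup\{c_j:j\in J^\circ\cup J^\bullet\}$, and each $P_i$ connects either a vertex of $\{r_i:i\in I^\circ\}$ with one of $\{r_i:i\in I^\bullet\}$, or a vertex of $\{c_j:j\in J^\circ\}$ with one of $\{c_j:j\in J^\bullet\}$, or a vertex of $\{r_i:i\in I^\circ\}$ with one of $\{c_j:j\in J^\circ\}$, or a vertex of $\{r_i:i\in I^\bullet\}$ with one of $\{c_j:j\in J^\bullet\}$; (iii) in each path $P_i$, traversed from one end to the other, the edges of $\phi$ and the edges of $\phi'$ have opposite directions (say, all edges of $\phi$ on $P_i$ are traversed forward and all edges of $\phi'$ backward).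
   Context: Notation: $[p]=\{1,\dots,p\}$; $\mathcal E^{m,n}$ is the set of pairs $(I|J)$, $I\subseteq[m]$, $J\subseteq[n]$, $|I|=|J|$. An SE-graph is a finite directed graph $G=(V,E)$ embedded in the plane (planar with a fixed layout) such that: every edge is either horizontal (H-edge) directed to the right or vertical (V-edge) directed downward; there are distinguished sources $r_1,\dots,r_m$ on a vertical line in this order upward and sinks $c_1,\dots,c_n$ on a horizontal line in this order from left to right; sources are incident only with H-edges, sinks only with V-edges; every vertex lies on a directed path from a source to a sink. For $(I|J)\in\mathcal E^{m,n}$, an $(I|J)$-flow is a set of pairwise vertex-disjoint directed paths from $\{r_i:i\in I\}$ to $\{c_j:j\in J\}$. For $(I|J),(I'|J')\in\mathcal E^{m,n}$ put $I^\circ=I\setminus I'$, $I^\bullet=I'\setminus I$, $J^\circ=J\setminus J'$, $J^\bullet=J'\setminus J$. Given an $(I|J)$-flow $\phi$ and an $(I'|J')$-flow $\phi'$ (a double flow), let $E_\phi,E_{\phi'}$ be their edge sets and $U=E_\phi\triangle E_{\phi'}$. In the subgraph $\langle U\rangle$ formed by the edges of $U$, every vertex has degree 1, 2 or 4. Split each vertex $v$ of degree 4 into two nearby vertices $v',v''$ so that the edges of $U$ entering $v$ now enter $v'$ and those leaving $v$ now leave $v''$; the resulting planar graph $\langle U\rangle'$ has all degrees at most 2, so it is a disjoint union of (undirected) simple paths $P'_1,\dots,P'_k$ and simple cycles. The images $P_1,\dots,P_k$ of $P'_1,\dots,P'_k$ in $G$ are called the exchange paths of $(\phi,\phi')$.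 *)

theory Defs
  imports "HOL-Analysis.Analysis"
begin

definition pairs_E :: "nat \<Rightarrow> nat \<Rightarrow> nat set \<Rightarrow> nat set \<Rightarrow> bool" where
  "pairs_E m n I J \<longleftrightarrow> I \<subseteq> {1..m} \<and> J \<subseteq> {1..n} \<and> card I = card J"

definition SE_graph ::
  "'v set \<Rightarrow> ('v \<times> 'v) set \<Rightarrow> ('v \<Rightarrow> real \<times> real) \<Rightarrow> nat \<Rightarrow> nat \<Rightarrow> (nat \<Rightarrow> 'v) \<Rightarrow> (nat \<Rightarrow> 'v) \<Rightarrow> bool"
where
  "SE_graph V E pos m n r c \<longleftrightarrow>
     finite V \<and> E \<subseteq> V \<times> V \<and> inj_on pos V \<and>
     \<comment> \<open>every edge is an H-edge directed right or a V-edge directed down\<close>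
     (\<forall>(u,v)\<in>E. (snd (pos u) = snd (pos v) \<and> fst (pos u) < fst (pos v)) \<or>
                 (fst (pos u) = fst (pos v) \<and> snd (pos u) > snd (pos v))) \<and>
     \<comment> \<open>planar embedding: no vertex in the interior of an edge, edges meet only in common ends\<close>
     (\<forall>w\<in>V. \<forall>(u,v)\<in>E. pos w \<in> closed_segment (pos u) (pos v) \<longrightarrow> w = u \<or> w = v) \<and>
     (\<forall>(u1,v1)\<in>E. \<forall>(u2,v2)\<in>E. (u1,v1) \<noteq> (u2,v2) \<longrightarrow>
         closed_segment (pos u1) (pos v1) \<inter> closed_segment (pos u2) (pos v2)
           \<subseteq> pos ` ({u1,v1} \<inter> {u2,v2})) \<and>
     \<comment> \<open>sources and sinks\<close>
     r ` {1..m} \<subseteq> V \<and> c ` {1..n} \<subseteq> V \<and>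
     r ` {1..m} \<inter> c ` {1..n} = {} \<and>
     (\<forall>i\<in>{1..m}. \<forall>i'\<in>{1..m}. fst (pos (r i)) = fst (pos (r i')) \<and>
                                   (i < i' \<longrightarrow> snd (pos (r i)) < snd (pos (r i')))) \<and>
     (\<forall>j\<in>{1..n}. \<forall>j'\<in>{1..n}. snd (pos (c j)) = snd (pos (c j')) \<and>
                                   (j < j' \<longrightarrow> fst (pos (c j)) < fst (pos (c j')))) \<and>
     (\<forall>i\<in>{1..m}. \<forall>(u,v)\<in>E. (u = r i \<or> v = r i) \<longrightarrow> snd (pos u) = snd (pos v)) \<and>
     (\<forall>j\<in>{1..n}. \<forall>(u,v)\<in>E. (u = c j \<or> v = c j) \<longrightarrow> fst (pos u) = fst (pos v)) \<and>
     \<comment> \<open>every vertex lies on a directed path from a source to a sink\<close>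
     (\<forall>v\<in>V. \<exists>i\<in>{1..m}. \<exists>j\<in>{1..n}. (r i, v) \<in> E\<^sup>* \<and> (v, c j) \<in> E\<^sup>*)"

definition dpath :: "('v \<times> 'v) set \<Rightarrow> 'v list \<Rightarrow> bool" where
  "dpath E ps \<longleftrightarrow> ps \<noteq> [] \<and> distinct ps \<and> successively (\<lambda>a b. (a,b) \<in> E) ps"

definition path_edges :: "'v list \<Rightarrow> ('v \<times> 'v) set" where
  "path_edges ps = set (zip ps (tl ps))"

definition is_flow ::
  "('v \<times> 'v) set \<Rightarrow> (nat \<Rightarrow> 'v) \<Rightarrow> (nat \<Rightarrow> 'v) \<Rightarrow> nat set \<Rightarrow> nat set \<Rightarrow> 'v list set \<Rightarrow> bool"
where
  "is_flow E r c I J \<Phi> \<longleftrightarrow>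
     finite \<Phi> \<and>
     (\<forall>P\<in>\<Phi>. dpath E P \<and> hd P \<in> r ` I \<and> last P \<in> c ` J) \<and>
     (\<forall>P\<in>\<Phi>. \<forall>Q\<in>\<Phi>. P \<noteq> Q \<longrightarrow> set P \<inter> set Q = {}) \<and>
     r ` I \<subseteq> hd ` \<Phi> \<and> c ` J \<subseteq> last ` \<Phi>"

definition flow_edges :: "'v list set \<Rightarrow> ('v \<times> 'v) set" where
  "flow_edges \<Phi> = (\<Union>P\<in>\<Phi>. path_edges P)"

text \<open>U is the symmetric difference of the edge sets. The split graph
  has nodes of type 'v \<times> bool: a vertex v of U-degree 4 is split into (v,False)
  (receiving the entering edges) and (v,True) (receiving the leaving edges);
  any other vertex v is represented by the single node (v,False).\<close>

definition symdiff :: "'a set \<Rightarrow> 'a set \<Rightarrow> 'a set" where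
  "symdiff A B = (A - B) \<union> (B - A)"

definition degU :: "('v \<times> 'v) set \<Rightarrow> 'v \<Rightarrow> nat" where
  "degU U v = card {e \<in> U. fst e = v \<or> snd e = v}"

definition node :: "('v \<times> 'v) set \<Rightarrow> 'v \<Rightarrow> bool \<Rightarrow> 'v \<times> bool" where
  "node U v b = (v, b \<and> degU U v = 4)"

definition split_adj :: "('v \<times> 'v) set \<Rightarrow> 'v \<times> bool \<Rightarrow> 'v \<times> bool \<Rightarrow> bool" where
  "split_adj U x y \<longleftrightarrow> (\<exists>(u,w)\<in>U. (x = node U u True \<and> y = node U w False) \<or>
                                  (y = node U u True \<and> x = node U w False))"

definition split_deg :: "('v \<times> 'v) set \<Rightarrow> 'v \<times> bool \<Rightarrow> nat" where
  "split_deg U x = card {(u,w) \<in> U. node U u True = x \<or> node U w False = x}"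

text \<open>A path component of the split graph, listed from one end to the other:
  a simple path with at least one edge whose end nodes have degree 1 and whose
  inner nodes have degree 2 (so it is a whole connected component).\<close>

definition split_component_path :: "('v \<times> 'v) set \<Rightarrow> ('v \<times> bool) list \<Rightarrow> bool" where
  "split_component_path U xs \<longleftrightarrow>
     distinct xs \<and> length xs \<ge> 2 \<and> successively (split_adj U) xs \<and>
     split_deg U (hd xs) = 1 \<and> split_deg U (last xs) = 1 \<and>
     (\<forall>i. 0 < i \<and> i < length xs - 1 \<longrightarrow> split_deg U (xs ! i) = 2)"

text \<open>Oriented exchange paths (images in G, as vertex sequences; both orientations
  of every path are included).\<close>

definition oriented_exchange_paths :: "'v list set \<Rightarrow> 'v list set \<Rightarrow> 'v list set" where
  "oriented_exchange_paths \<Phi> \<Phi>' =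
     {map fst xs | xs. split_component_path (symdiff (flow_edges \<Phi>) (flow_edges \<Phi>')) xs}"

definition exchange_paths :: "'v list set \<Rightarrow> 'v list set \<Rightarrow> 'v list set set" where
  "exchange_paths \<Phi> \<Phi>' = (\<lambda>P. {P, rev P}) ` oriented_exchange_paths \<Phi> \<Phi>'"

end

theory Submission
  imports Defs
begin

text \<open>In the symmetric difference U of the two edge sets, each vertex has at most one entering
  and one leaving edge of each flow, so after splitting the vertices of U-degree four every node
  of the split graph has degree at most two, and the nodes of degree one are exactly the sources
  and sinks used by only one of the two flows. The path components of the split graph are
  therefore determined by their first vertex, and their number is half the number of such
  sources and sinks. Along a component the property "this step traverses an edge of \<phi> forward
  or an edge of \<phi>' backward" never changes: at a vertex of U-degree two the two edges either
  belong to one flow passing through it or to two flows meeting head to head or tail to tail,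
  and a split vertex of degree four separates its entering edges from its leaving ones.
  Evaluating this property at the first and the last edge shows which kinds of end vertices
  a component can connect.\<close>

lemma in_set_zip_tl_iff:
  "(a, b) \<in> set (zip xs (tl xs)) \<longleftrightarrow> (\<exists>i. Suc i < length xs \<and> xs ! i = a \<and> xs ! Suc i = b)"
proof -
  have "(a, b) \<in> set (zip xs (tl xs)) \<longleftrightarrow> (\<exists>i. xs ! i = a \<and> tl xs ! i = b \<and> i < length xs \<and> i < length (tl xs))"
    by (simp only: in_set_zip fst_conv snd_conv)
  also have "\<dots> \<longleftrightarrow> (\<exists>i. Suc i < length xs \<and> xs ! i = a \<and> xs ! Suc i = b)"
    by (auto simp: nth_tl less_diff_conv)
  finally show ?thesis .
qed

subsection \<open>Graphs of maximum degree two\<close>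

locale max_deg2_graph =
  fixes adj :: "'a \<Rightarrow> 'a \<Rightarrow> bool"
  assumes adj_sym: "adj x y \<Longrightarrow> adj y x"
    and adj_irrefl: "\<not> adj x x"
    and finite_non_isolated: "finite {x. \<exists>y. adj x y}"
    and card_neighbours_le_2: "card {y. adj x y} \<le> 2"
begin

definition deg :: "'a \<Rightarrow> nat" where
  "deg x = card {y. adj x y}"

definition component_path :: "'a list \<Rightarrow> bool" where
  "component_path xs \<longleftrightarrow> distinct xs \<and> length xs \<ge> 2 \<and> successively adj xs \<and>
     deg (hd xs) = 1 \<and> deg (last xs) = 1 \<and> (\<forall>i. 0 < i \<and> i < length xs - 1 \<longrightarrow> deg (xs ! i) = 2)"

lemma finite_neighbours: "finite {y. adj x y}"
  by (rule finite_subset[OF _ finite_non_isolated]) (auto intro: adj_sym)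

lemma deg_le_2: "deg x \<le> 2"
  unfolding deg_def by (rule card_neighbours_le_2)

lemma deg_ge_card_neighbours: "A \<subseteq> {y. adj x y} \<Longrightarrow> card A \<le> deg x"
  unfolding deg_def using finite_neighbours by (rule card_mono)

lemma deg_pos: "adj x y \<Longrightarrow> deg x \<noteq> 0"
  using deg_ge_card_neighbours[of "{y}" x] by simp

lemma deg_1_neighbour_unique: "deg x = 1 \<Longrightarrow> adj x a \<Longrightarrow> adj x b \<Longrightarrow> a = b"
  using deg_ge_card_neighbours[of "{a, b}" x] by (cases "a = b") auto

lemma deg_2_neighbour_cases:
  "deg x = 2 \<Longrightarrow> adj x a \<Longrightarrow> adj x b \<Longrightarrow> adj x c \<Longrightarrow> a \<noteq> b \<Longrightarrow> c = a \<or> c = b"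
  using deg_ge_card_neighbours[of "{a, b, c}" x] by (cases "c = a \<or> c = b") auto

lemma component_path_adj: "component_path xs \<Longrightarrow> Suc i < length xs \<Longrightarrow> adj (xs ! i) (xs ! Suc i)"
  unfolding component_path_def by (auto intro: successively_nth)

lemma component_path_nonempty: "component_path xs \<Longrightarrow> xs \<noteq> []"
  unfolding component_path_def by auto

text \<open>A component path is determined by its first vertex: the degree bound leaves no choice for the
  next vertex.\<close>

lemma component_path_prefix_eq:
  assumes xs: "component_path xs" and ys: "component_path ys" and hd_eq: "hd xs = hd ys"
  shows "i < length xs \<Longrightarrow> i < length ys \<Longrightarrow> j \<le> i \<Longrightarrow> xs ! j = ys ! j"
proof (induction i arbitrary: j)
  case 0
  then show ?case
    using hd_eq component_path_nonempty[OF xs] component_path_nonempty[OF ys] by (simp add: hd_conv_nth)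
next
  case (Suc i)
  have IH: "j \<le> i \<Longrightarrow> xs ! j = ys ! j" for j using Suc by simp
  have "xs ! Suc i = ys ! Suc i"
  proof (cases i)
    case 0
    have "deg (xs ! 0) = 1"
      using xs component_path_nonempty[OF xs] unfolding component_path_def by (simp add: hd_conv_nth)
    then show ?thesis
      using component_path_adj[OF xs, of 0] component_path_adj[OF ys, of 0] Suc.prems IH[of 0] 0
      by (auto intro: deg_1_neighbour_unique)
  next
    case (Suc i')
    have "deg (xs ! i) = 2" using xs Suc \<open>Suc i < length xs\<close> unfolding component_path_def by auto
    moreover have "adj (xs ! i) (xs ! i')" "adj (xs ! i) (xs ! Suc i)" "adj (xs ! i) (ys ! Suc i)"
      using component_path_adj[OF xs, of i'] component_path_adj[OF xs, of i]
        component_path_adj[OF ys, of i] Suc \<open>Suc i < length xs\<close> \<open>Suc i < length ys\<close> IH[of i]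
      by (auto intro: adj_sym)
    moreover have "xs ! i' \<noteq> xs ! Suc i" "ys ! i' \<noteq> ys ! Suc i"
      using xs ys Suc \<open>Suc i < length xs\<close> \<open>Suc i < length ys\<close>
      unfolding component_path_def by (simp_all add: nth_eq_iff_index_eq)
    ultimately show ?thesis using deg_2_neighbour_cases IH[of i'] Suc by fastforce
  qed
  then show ?case using IH Suc.prems(3) le_Suc_eq by auto
qed

lemma component_path_unique:
  assumes xs: "component_path xs" and ys: "component_path ys" and hd_eq: "hd xs = hd ys"
  shows "xs = ys"
proof -
  note prefix = component_path_prefix_eq[OF xs ys hd_eq]
  have ends: "deg (xs ! (length xs - 1)) = 1" "deg (ys ! (length ys - 1)) = 1"
    using xs ys component_path_nonempty[OF xs] component_path_nonempty[OF ys]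
    unfolding component_path_def by (simp_all add: last_conv_nth)
  have "length xs = length ys"
  proof (rule ccontr)
    assume "length xs \<noteq> length ys"
    then consider "length xs < length ys" | "length ys < length xs" by linarith
    then show False
    proof cases
      case 1
      then have "deg (ys ! (length xs - 1)) = 2" using xs ys unfolding component_path_def by auto
      then show False using ends prefix[of "length xs - 1" "length xs - 1"] 1 xs
        unfolding component_path_def by auto
    next
      case 2
      then have "deg (xs ! (length ys - 1)) = 2" using xs ys unfolding component_path_def by auto
      then show False using ends prefix[of "length ys - 1" "length ys - 1"] 2 ys
        unfolding component_path_def by auto
    qed
  qed
  then show ?thesis using prefix by (auto intro: nth_equalityI)
qed

lemma component_path_rev: "component_path xs \<Longrightarrow> component_path (rev xs)"
  unfolding component_path_def
  apply (auto simp: hd_rev last_rev rev_nth intro: adj_sym elim: successively_mono)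
  subgoal for i by (drule spec[of _ "length xs - Suc i"]) auto
  done

lemma component_path_hd_neq_last: "component_path xs \<Longrightarrow> hd xs \<noteq> last xs"
  unfolding component_path_def by (cases xs) auto

text \<open>A longest such walk from a vertex of degree one is a component path.\<close>

definition deg2_walk_from :: "'a \<Rightarrow> 'a list \<Rightarrow> bool" where
  "deg2_walk_from x0 xs \<longleftrightarrow> distinct xs \<and> xs \<noteq> [] \<and> hd xs = x0 \<and> successively adj xs \<and>
     (\<forall>i. 0 < i \<and> i < length xs - 1 \<longrightarrow> deg (xs ! i) = 2)"

lemma deg2_walk_from_length_le:
  assumes "deg2_walk_from x0 xs"
  shows "length xs \<le> card (insert x0 {x. \<exists>y. adj x y})"
proof -
  have "set xs \<subseteq> insert x0 {x. \<exists>y. adj x y}"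
  proof
    fix x assume "x \<in> set xs"
    then obtain i where i: "i < length xs" "x = xs ! i" by (auto simp: in_set_conv_nth)
    show "x \<in> insert x0 {x. \<exists>y. adj x y}"
    proof (cases i)
      case 0
      then show ?thesis using assms i unfolding deg2_walk_from_def by (auto simp: hd_conv_nth)
    next
      case (Suc j)
      then have "adj (xs ! j) x" using assms i unfolding deg2_walk_from_def by (auto intro: successively_nth)
      then show ?thesis by (auto intro: adj_sym)
    qed
  qed
  then have "card (set xs) \<le> card (insert x0 {x. \<exists>y. adj x y})"
    using finite_non_isolated by (intro card_mono) auto
  then show ?thesis using assms distinct_card unfolding deg2_walk_from_def by metis
qed

lemma deg2_walk_from_last_neighbour:
  assumes w: "deg2_walk_from x0 xs" and x0: "deg x0 = 1" and len: "length xs \<ge> 2"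
    and j: "j < length xs" and z: "adj (last xs) (xs ! j)"
  shows "j = length xs - 2"
proof (rule ccontr)
  assume j_neq: "j \<noteq> length xs - 2"
  define l where "l = length xs - 1"
  have dist: "distinct xs" and adj_next: "\<And>i. Suc i < length xs \<Longrightarrow> adj (xs ! i) (xs ! Suc i)"
    using w unfolding deg2_walk_from_def by (auto intro: successively_nth)
  have last_l: "last xs = xs ! l" using w unfolding l_def deg2_walk_from_def by (simp add: last_conv_nth)
  have "j \<noteq> l" using z last_l adj_irrefl by auto
  with j j_neq have jl: "j + 2 < length xs" unfolding l_def by linarith
  show False
  proof (cases j)
    case 0
    have "adj x0 (xs ! 1)" "adj x0 (xs ! l)"
      using adj_next[of 0] jl z last_l 0 w unfolding deg2_walk_from_def
      by (auto simp: hd_conv_nth intro: adj_sym)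
    moreover have "xs ! 1 \<noteq> xs ! l" using dist jl unfolding l_def by (simp add: nth_eq_iff_index_eq)
    ultimately show False using deg_1_neighbour_unique[OF x0] by blast
  next
    case (Suc j')
    have "deg (xs ! j) = 2" using w Suc jl unfolding deg2_walk_from_def by auto
    moreover have "adj (xs ! j) (xs ! j')" "adj (xs ! j) (xs ! Suc j)" "adj (xs ! j) (xs ! l)"
      using adj_next[of j'] adj_next[of j] Suc jl z last_l by (auto intro: adj_sym)
    moreover have "xs ! j' \<noteq> xs ! Suc j" "xs ! l \<noteq> xs ! j'" "xs ! l \<noteq> xs ! Suc j"
      using dist jl Suc unfolding l_def by (simp_all add: nth_eq_iff_index_eq)
    ultimately show False using deg_2_neighbour_cases by blast
  qed
qed

lemma deg2_walk_from_extend: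
  assumes w: "deg2_walk_from x0 xs" and x0: "deg x0 = 1" and len: "length xs \<ge> 2"
    and last_deg: "deg (last xs) \<noteq> 1"
  shows "\<exists>z. deg2_walk_from x0 (xs @ [z])"
proof -
  define l where "l = length xs - 1"
  have last_l: "last xs = xs ! l" using w unfolding l_def deg2_walk_from_def by (simp add: last_conv_nth)
  have "Suc (l - 1) = l" "l < length xs" using len unfolding l_def by auto
  then have pred: "adj (last xs) (xs ! (l - 1))"
    using w last_l successively_nth[of adj xs "l - 1"] unfolding deg2_walk_from_def
    by (auto intro: adj_sym)
  have deg_last: "deg (last xs) = 2" using deg_pos[OF pred] last_deg deg_le_2[of "last xs"] by linarith
  have "card ({y. adj (last xs) y} - {xs ! (l - 1)}) = 1"
    using deg_last pred finite_neighbours unfolding deg_def by simp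
  then obtain z where z: "adj (last xs) z" "z \<noteq> xs ! (l - 1)"
    by (metis (no_types, lifting) DiffE card_1_singletonE insertI1 mem_Collect_eq singletonD)
  have "z \<notin> set xs"
  proof
    assume "z \<in> set xs"
    then obtain j where "j < length xs" "z = xs ! j" by (auto simp: in_set_conv_nth)
    then show False
      using deg2_walk_from_last_neighbour[OF w x0 len] z unfolding l_def by (auto simp: numeral_2_eq_2)
  qed
  moreover have "deg ((xs @ [z]) ! i) = 2" if "0 < i" "i < length xs" for i
  proof (cases "i = l")
    case True
    then show ?thesis using deg_last last_l that by (simp add: nth_append l_def)
  next
    case False
    then show ?thesis using w that unfolding deg2_walk_from_def l_def by (simp add: nth_append)
  qed
  ultimately have "deg2_walk_from x0 (xs @ [z])"
    using w z unfolding deg2_walk_from_def by (auto simp: successively_append_iff)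
  then show ?thesis ..
qed

lemma component_path_from_deg_1:
  assumes x0: "deg x0 = 1"
  shows "\<exists>xs. component_path xs \<and> hd xs = x0"
proof -
  obtain xs where w: "deg2_walk_from x0 xs"
    and longest: "\<And>ys. deg2_walk_from x0 ys \<Longrightarrow> length ys \<le> length xs"
    using ex_has_greatest_nat[of "deg2_walk_from x0" "[x0]" length "Suc (card (insert x0 {x. \<exists>y. adj x y}))"]
      deg2_walk_from_length_le by (fastforce simp: deg2_walk_from_def)
  obtain y where "adj x0 y" using x0 unfolding deg_def by (metis card.empty zero_neq_one empty_Collect_eq)
  then have "deg2_walk_from x0 [x0, y]" using adj_irrefl unfolding deg2_walk_from_def by auto
  from longest[OF this] have len: "length xs \<ge> 2" by simp
  have "deg (last xs) = 1"
    using deg2_walk_from_extend[OF w x0 len] longest by fastforce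
  then have "component_path xs" using w len x0 unfolding component_path_def deg2_walk_from_def by auto
  then show ?thesis using w unfolding deg2_walk_from_def by auto
qed

end

subsection \<open>Edge sets of flows and their symmetric difference\<close>

text \<open>A flow is described through its edge set F only: R and C are all sources and sinks of the
  ambient graph, and S and T those used by the flow.\<close>

locale flow_edge_set =
  fixes E F :: "('v \<times> 'v) set" and R C S T :: "'v set"
  assumes finite_E: "finite E"
    and E_asym: "(a, b) \<in> E \<Longrightarrow> (b, a) \<notin> E"
    and F_subset_E: "F \<subseteq> E"
    and no_edge_into_R: "v \<in> R \<Longrightarrow> (a, v) \<notin> E"
    and no_edge_out_of_C: "v \<in> C \<Longrightarrow> (v, b) \<notin> E"
    and R_C_disjoint: "R \<inter> C = {}"
    and finite_R: "finite R" and finite_C: "finite C"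
    and S_subset_R: "S \<subseteq> R" and T_subset_C: "T \<subseteq> C"
    and pred_unique: "(a, v) \<in> F \<Longrightarrow> (a', v) \<in> F \<Longrightarrow> a = a'"
    and succ_unique: "(v, b) \<in> F \<Longrightarrow> (v, b') \<in> F \<Longrightarrow> b = b'"
    and source_iff: "v \<in> R \<Longrightarrow> (\<exists>b. (v, b) \<in> F) \<longleftrightarrow> v \<in> S"
    and sink_iff: "v \<in> C \<Longrightarrow> (\<exists>a. (a, v) \<in> F) \<longleftrightarrow> v \<in> T"
    and inner_in_iff_out: "v \<notin> R \<Longrightarrow> v \<notin> C \<Longrightarrow> (\<exists>a. (a, v) \<in> F) \<longleftrightarrow> (\<exists>b. (v, b) \<in> F)"
begin

lemma preds_subsingleton: "{a. (a, v) \<in> F} = {} \<or> (\<exists>a. {a. (a, v) \<in> F} = {a})"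
  using pred_unique by blast

lemma succs_subsingleton: "{b. (v, b) \<in> F} = {} \<or> (\<exists>b. {b. (v, b) \<in> F} = {b})"
  using succ_unique by blast

end

lemma card_symdiff_subsingletons:
  assumes "A = {} \<or> (\<exists>a. A = {a})" "B = {} \<or> (\<exists>b. B = {b})"
  shows "card (symdiff A B) \<le> 2 \<and> (card (symdiff A B) = 1 \<longleftrightarrow> (A = {}) \<noteq> (B = {})) \<and>
     (card (symdiff A B) = 2 \<longleftrightarrow> A \<noteq> {} \<and> B \<noteq> {} \<and> A \<noteq> B)"
proof -
  from assms consider "A = {}" "B = {}" | a where "A = {a}" "B = {}" | b where "A = {}" "B = {b}"
    | a b where "A = {a}" "B = {b}" by blast
  then show ?thesis
  proof cases
    case (4 a b)
    then show ?thesis by (cases "a = b") (simp_all add: symdiff_def insert_Diff_if)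
  qed (simp_all add: symdiff_def)
qed

locale double_flow = phi: flow_edge_set E F R C S T + phi': flow_edge_set E F' R C S' T'
  for E F F' :: "('v \<times> 'v) set" and R C S T S' T' :: "'v set"
begin

definition U :: "('v \<times> 'v) set" where
  "U = symdiff F F'"

definition U_preds :: "'v \<Rightarrow> 'v set" where
  "U_preds v = {a. (a, v) \<in> U}"

definition U_succs :: "'v \<Rightarrow> 'v set" where
  "U_succs v = {b. (v, b) \<in> U}"

text \<open>Exchange paths leave the vertices of D_plus, and enter those of D_minus, by a step that
  agrees with the direction of F.\<close>

definition D_plus :: "'v set" where
  "D_plus = (S - S') \<union> (T' - T)"

definition D_minus :: "'v set" where
  "D_minus = (S' - S) \<union> (T - T')"

definition D :: "'v set" where
  "D = D_plus \<union> D_minus"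

lemma U_subset_E: "U \<subseteq> E"
  using phi.F_subset_E phi'.F_subset_E unfolding U_def symdiff_def by auto

lemma finite_U: "finite U"
  using U_subset_E phi.finite_E finite_subset by blast

lemma U_irrefl: "(v, v) \<notin> U"
  using U_subset_E phi.E_asym by blast

lemma U_asym: "(a, b) \<in> U \<Longrightarrow> (b, a) \<notin> U"
  using U_subset_E phi.E_asym by blast

lemma U_notin_F: "(a, b) \<in> U \<Longrightarrow> (a, b) \<notin> F \<Longrightarrow> (a, b) \<in> F' - F"
  unfolding U_def symdiff_def by blast

lemma U_in_F: "(a, b) \<in> U \<Longrightarrow> (a, b) \<in> F \<Longrightarrow> (a, b) \<in> F - F'"
  unfolding U_def symdiff_def by blast

lemma D_plus_D_minus_disjoint: "D_plus \<inter> D_minus = {}"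
  using phi.S_subset_R phi'.S_subset_R phi.T_subset_C phi'.T_subset_C phi.R_C_disjoint
  unfolding D_plus_def D_minus_def by blast

lemma D_subset: "D \<subseteq> R \<union> C"
  using phi.S_subset_R phi'.S_subset_R phi.T_subset_C phi'.T_subset_C
  unfolding D_def D_plus_def D_minus_def by auto

lemma finite_D: "finite D"
  using D_subset phi.finite_R phi.finite_C finite_subset by blast

subsection \<open>Degrees in U and in the split graph\<close>

lemma U_preds_eq: "U_preds v = symdiff {a. (a, v) \<in> F} {a. (a, v) \<in> F'}"
  unfolding U_preds_def U_def symdiff_def by auto

lemma U_succs_eq: "U_succs v = symdiff {b. (v, b) \<in> F} {b. (v, b) \<in> F'}"
  unfolding U_succs_def U_def symdiff_def by auto

lemma card_U_preds:
  "card (U_preds v) \<le> 2 \<and>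
   (card (U_preds v) = 1 \<longleftrightarrow> ({a. (a, v) \<in> F} = {}) \<noteq> ({a. (a, v) \<in> F'} = {})) \<and>
   (card (U_preds v) = 2 \<longleftrightarrow> {a. (a, v) \<in> F} \<noteq> {} \<and> {a. (a, v) \<in> F'} \<noteq> {} \<and>
      {a. (a, v) \<in> F} \<noteq> {a. (a, v) \<in> F'})"
  unfolding U_preds_eq by (rule card_symdiff_subsingletons[OF phi.preds_subsingleton phi'.preds_subsingleton])

lemma card_U_succs:
  "card (U_succs v) \<le> 2 \<and>
   (card (U_succs v) = 1 \<longleftrightarrow> ({b. (v, b) \<in> F} = {}) \<noteq> ({b. (v, b) \<in> F'} = {})) \<and>
   (card (U_succs v) = 2 \<longleftrightarrow> {b. (v, b) \<in> F} \<noteq> {} \<and> {b. (v, b) \<in> F'} \<noteq> {} \<and>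
      {b. (v, b) \<in> F} \<noteq> {b. (v, b) \<in> F'})"
  unfolding U_succs_eq by (rule card_symdiff_subsingletons[OF phi.succs_subsingleton phi'.succs_subsingleton])

lemma finite_U_preds: "finite (U_preds v)"
  by (rule finite_subset[of _ "fst ` U"]) (force simp: U_preds_def, simp add: finite_U)

lemma finite_U_succs: "finite (U_succs v)"
  by (rule finite_subset[of _ "snd ` U"]) (force simp: U_succs_def, simp add: finite_U)

lemma degU_eq: "degU U v = card (U_preds v) + card (U_succs v)"
proof -
  have "{e \<in> U. fst e = v \<or> snd e = v} = (\<lambda>a. (a, v)) ` U_preds v \<union> (\<lambda>b. (v, b)) ` U_succs v"
    unfolding U_preds_def U_succs_def by force
  moreover have "(\<lambda>a. (a, v)) ` U_preds v \<inter> (\<lambda>b. (v, b)) ` U_succs v = {}"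
    using U_irrefl unfolding U_preds_def U_succs_def by auto
  ultimately have "degU U v = card ((\<lambda>a. (a, v)) ` U_preds v) + card ((\<lambda>b. (v, b)) ` U_succs v)"
    unfolding degU_def using finite_U_preds finite_U_succs by (simp add: card_Un_disjoint)
  then show ?thesis by (simp add: card_image inj_on_def)
qed

lemma degU_eq_4_iff: "degU U v = 4 \<longleftrightarrow> card (U_preds v) = 2 \<and> card (U_succs v) = 2"
  using degU_eq[of v] card_U_preds[of v] card_U_succs[of v] by linarith

lemma degU_eq_4_if_flows_cross:
  assumes "(a, v) \<in> U" "(v, b) \<in> U" "(a, v) \<in> F \<longleftrightarrow> (v, b) \<notin> F"
  shows "degU U v = 4"
proof -
  have "(a, v) \<in> E" "(v, b) \<in> E" using assms U_subset_E by auto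
  then have inner: "v \<notin> R" "v \<notin> C" using phi.no_edge_into_R phi.no_edge_out_of_C by auto
  consider "(a, v) \<in> F - F'" "(v, b) \<in> F' - F" | "(a, v) \<in> F' - F" "(v, b) \<in> F - F'"
    using assms U_notin_F U_in_F by blast
  then have "card (U_preds v) = 2 \<and> card (U_succs v) = 2"
  proof cases
    case 1
    obtain b' where "(v, b') \<in> F" using phi.inner_in_iff_out[OF inner] 1 by blast
    moreover obtain a' where "(a', v) \<in> F'" using phi'.inner_in_iff_out[OF inner] 1 by blast
    ultimately have "{a. (a, v) \<in> F} \<noteq> {a. (a, v) \<in> F'}" "{b. (v, b) \<in> F} \<noteq> {b. (v, b) \<in> F'}"
      "{a. (a, v) \<in> F} \<noteq> {}" "{a. (a, v) \<in> F'} \<noteq> {}" "{b. (v, b) \<in> F} \<noteq> {}" "{b. (v, b) \<in> F'} \<noteq> {}"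
      using 1 by auto
    then show ?thesis using card_U_preds[of v] card_U_succs[of v] by simp
  next
    case 2
    obtain b' where "(v, b') \<in> F'" using phi'.inner_in_iff_out[OF inner] 2 by blast
    moreover obtain a' where "(a', v) \<in> F" using phi.inner_in_iff_out[OF inner] 2 by blast
    ultimately have "{a. (a, v) \<in> F} \<noteq> {a. (a, v) \<in> F'}" "{b. (v, b) \<in> F} \<noteq> {b. (v, b) \<in> F'}"
      "{a. (a, v) \<in> F} \<noteq> {}" "{a. (a, v) \<in> F'} \<noteq> {}" "{b. (v, b) \<in> F} \<noteq> {}" "{b. (v, b) \<in> F'} \<noteq> {}"
      using 2 by auto
    then show ?thesis using card_U_preds[of v] card_U_succs[of v] by simp
  qed
  then show ?thesis using degU_eq_4_iff by simp
qed

lemma degU_small_unless_4: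
  assumes "degU U v \<noteq> 4"
  shows "degU U v \<le> 2 \<and> (degU U v = 1 \<longleftrightarrow> v \<in> D)"
proof -
  consider "v \<in> R" | "v \<in> C" | "v \<notin> R" "v \<notin> C" by blast
  then show ?thesis
  proof cases
    case 1
    then have "U_preds v = {}" using phi.no_edge_into_R U_subset_E unfolding U_preds_def by auto
    then have deg: "degU U v = card (U_succs v)" using degU_eq[of v] by simp
    have "v \<notin> C" using 1 phi.R_C_disjoint by auto
    then have "v \<in> D \<longleftrightarrow> (v \<in> S) \<noteq> (v \<in> S')"
      using phi.T_subset_C phi'.T_subset_C unfolding D_def D_plus_def D_minus_def by blast
    also have "\<dots> \<longleftrightarrow> ({b. (v, b) \<in> F} = {}) \<noteq> ({b. (v, b) \<in> F'} = {})"
      using phi.source_iff[OF 1] phi'.source_iff[OF 1] by blast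
    also have "\<dots> \<longleftrightarrow> card (U_succs v) = 1" using card_U_succs[of v] by blast
    finally show ?thesis using deg card_U_succs[of v] by simp
  next
    case 2
    then have "U_succs v = {}" using phi.no_edge_out_of_C U_subset_E unfolding U_succs_def by auto
    then have deg: "degU U v = card (U_preds v)" using degU_eq[of v] by simp
    have "v \<notin> R" using 2 phi.R_C_disjoint by auto
    then have "v \<in> D \<longleftrightarrow> (v \<in> T) \<noteq> (v \<in> T')"
      using phi.S_subset_R phi'.S_subset_R unfolding D_def D_plus_def D_minus_def by blast
    also have "\<dots> \<longleftrightarrow> ({a. (a, v) \<in> F} = {}) \<noteq> ({a. (a, v) \<in> F'} = {})"
      using phi.sink_iff[OF 2] phi'.sink_iff[OF 2] by blast
    also have "\<dots> \<longleftrightarrow> card (U_preds v) = 1" using card_U_preds[of v] by blast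
    finally show ?thesis using deg card_U_preds[of v] by simp
  next
    case 3
    then have "v \<notin> D" using D_subset by auto
    moreover have "({a. (a, v) \<in> F} = {}) = ({b. (v, b) \<in> F} = {})"
      "({a. (a, v) \<in> F'} = {}) = ({b. (v, b) \<in> F'} = {})"
      using phi.inner_in_iff_out[OF 3] phi'.inner_in_iff_out[OF 3] by blast+
    then have "card (U_preds v) = 1 \<longleftrightarrow> card (U_succs v) = 1"
      using card_U_preds[of v] card_U_succs[of v] by simp
    moreover have "card (U_preds v) \<le> 2" "card (U_succs v) \<le> 2"
      using card_U_preds[of v] card_U_succs[of v] by simp_all
    ultimately show ?thesis using degU_eq[of v] assms by auto
  qed
qed

lemma degU_neq_4_if_D:
  assumes "v \<in> D"
  shows "degU U v \<noteq> 4"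
proof -
  have "U_preds v = {} \<or> U_succs v = {}"
    using assms D_subset U_subset_E phi.no_edge_into_R phi.no_edge_out_of_C
    unfolding U_preds_def U_succs_def by blast
  then show ?thesis using degU_eq_4_iff by auto
qed

lemma fst_node [simp]: "fst (node U v b) = v"
  by (simp add: node_def)

lemma node_eq_imp_eq: "node U u b = node U w b' \<Longrightarrow> u = w"
  by (metis fst_node)

lemma node_True_eq_False_iff: "node U v True = node U v False \<longleftrightarrow> degU U v \<noteq> 4"
  unfolding node_def by simp

lemma split_deg_True: "split_deg U (v, True) = (if degU U v = 4 then card (U_succs v) else 0)"
proof -
  have "{(u, w) \<in> U. node U u True = (v, True) \<or> node U w False = (v, True)} =
        (if degU U v = 4 then (\<lambda>b. (v, b)) ` U_succs v else {})"
    unfolding U_succs_def node_def by auto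
  then show ?thesis unfolding split_deg_def by (simp add: card_image inj_on_def)
qed

lemma split_deg_False: "split_deg U (v, False) = (if degU U v = 4 then card (U_preds v) else degU U v)"
proof (cases "degU U v = 4")
  case True
  then have "{(u, w) \<in> U. node U u True = (v, False) \<or> node U w False = (v, False)} =
        (\<lambda>a. (a, v)) ` U_preds v"
    unfolding U_preds_def node_def by auto
  then show ?thesis using True unfolding split_deg_def by (simp add: card_image inj_on_def)
next
  case False
  then have "{(u, w) \<in> U. node U u True = (v, False) \<or> node U w False = (v, False)} =
        {e \<in> U. fst e = v \<or> snd e = v}"
    unfolding node_def by auto
  then show ?thesis using False unfolding split_deg_def degU_def by simp
qed

lemma split_deg_le_2: "split_deg U x \<le> 2"
proof (cases x)
  case (Pair v b)
  have "card (U_preds v) \<le> 2" "card (U_succs v) \<le> 2"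
    using card_U_preds[of v] card_U_succs[of v] by simp_all
  then show ?thesis
    using Pair split_deg_True[of v] split_deg_False[of v] degU_small_unless_4[of v] by (cases b) auto
qed

lemma split_deg_eq_1_iff: "split_deg U x = 1 \<longleftrightarrow> x = (fst x, False) \<and> fst x \<in> D"
proof (cases x)
  case (Pair v b)
  show ?thesis
  proof (cases "degU U v = 4")
    case True
    then show ?thesis
      using Pair split_deg_True[of v] split_deg_False[of v] degU_eq_4_iff[of v] degU_neq_4_if_D[of v]
      by (cases b) auto
  next
    case False
    then show ?thesis
      using Pair split_deg_True[of v] split_deg_False[of v] degU_small_unless_4[of v] by (cases b) auto
  qed
qed

lemma split_adj_irrefl: "\<not> split_adj U x x"
  unfolding split_adj_def using U_irrefl node_eq_imp_eq by blast

lemma split_adj_sym: "split_adj U x y \<Longrightarrow> split_adj U y x"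
  unfolding split_adj_def by blast

lemma split_adj_U_edge: "split_adj U x y \<Longrightarrow> (fst x, fst y) \<in> U \<or> (fst y, fst x) \<in> U"
  unfolding split_adj_def by auto

lemma finite_split_non_isolated: "finite {x. \<exists>y. split_adj U x y}"
proof (rule finite_subset)
  show "{x. \<exists>y. split_adj U x y} \<subseteq> (fst ` U \<union> snd ` U) \<times> UNIV"
    unfolding split_adj_def node_def by force
  show "finite ((fst ` U \<union> snd ` U) \<times> (UNIV :: bool set))" using finite_U by simp
qed

text \<open>Each U-edge at a node contributes exactly one neighbour, because U has no loops and no
  antiparallel edges.\<close>

lemma card_split_neighbours: "card {y. split_adj U x y} = split_deg U x"
proof -
  define S where "S = {(u, w) \<in> U. node U u True = x \<or> node U w False = x}"
  define other where "other = (\<lambda>(u, w). if node U u True = x then node U w False else node U u True)"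
  have "{y. split_adj U x y} = other ` S"
  proof (rule set_eqI, rule iffI)
    fix y assume "y \<in> {y. split_adj U x y}"
    then obtain u w where uw: "(u, w) \<in> U"
      "(x = node U u True \<and> y = node U w False) \<or> (y = node U u True \<and> x = node U w False)"
      unfolding split_adj_def by blast
    then have "(u, w) \<in> S" unfolding S_def by auto
    moreover have "other (u, w) = y"
      using uw U_irrefl node_eq_imp_eq unfolding other_def by (cases "node U u True = x") auto
    ultimately show "y \<in> other ` S" by force
  next
    fix y assume "y \<in> other ` S"
    then obtain u w where "(u, w) \<in> U" "node U u True = x \<or> node U w False = x" "y = other (u, w)"
      unfolding S_def by auto
    then show "y \<in> {y. split_adj U x y}"
      unfolding other_def split_adj_def by (cases "node U u True = x") auto
  qed
  moreover have "inj_on other S"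
  proof (rule inj_onI)
    fix e1 e2 assume e: "e1 \<in> S" "e2 \<in> S" "other e1 = other e2"
    obtain u1 w1 u2 w2 where [simp]: "e1 = (u1, w1)" "e2 = (u2, w2)" by fastforce
    have U1: "(u1, w1) \<in> U" and U2: "(u2, w2) \<in> U" using e unfolding S_def by auto
    show "e1 = e2"
      using e U1 U2 U_asym[OF U1] U_asym[OF U2] node_eq_imp_eq unfolding S_def other_def
      by (auto split: if_splits) (metis node_eq_imp_eq)+
  qed
  moreover have "finite S" using finite_U by (rule finite_subset[rotated]) (auto simp: S_def)
  ultimately show ?thesis unfolding split_deg_def S_def[symmetric] by (simp add: card_image)
qed

sublocale split: max_deg2_graph "split_adj U"
  by unfold_locales
    (use split_adj_sym split_adj_irrefl finite_split_non_isolated card_split_neighbours split_deg_le_2 in auto)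

lemma split_component_path_iff: "split_component_path U xs \<longleftrightarrow> split.component_path xs"
  unfolding split_component_path_def split.component_path_def split.deg_def card_split_neighbours ..

lemma split_deg_1_iff: "split.deg x = 1 \<longleftrightarrow> x = (fst x, False) \<and> fst x \<in> D"
  unfolding split.deg_def card_split_neighbours split_deg_eq_1_iff ..

subsection \<open>Orientation and ends of exchange paths\<close>

definition agrees_with_F :: "'v \<Rightarrow> 'v \<Rightarrow> bool" where
  "agrees_with_F a b \<longleftrightarrow> (a, b) \<in> F - F' \<or> (b, a) \<in> F' - F"

lemma agrees_with_F_U_edge:
  "(a, b) \<in> U \<Longrightarrow> (agrees_with_F a b \<longleftrightarrow> (a, b) \<in> F) \<and> (agrees_with_F b a \<longleftrightarrow> (a, b) \<notin> F)"
  using U_asym[of a b] unfolding agrees_with_F_def U_def symdiff_def by blast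

lemma agrees_with_F_cases:
  "((a, b) \<in> F - F' \<longrightarrow> agrees_with_F a b) \<and> ((a, b) \<in> F' - F \<longrightarrow> \<not> agrees_with_F a b) \<and>
   ((b, a) \<in> F - F' \<longrightarrow> \<not> agrees_with_F a b) \<and> ((b, a) \<in> F' - F \<longrightarrow> agrees_with_F a b)"
  using phi.E_asym[of a b] phi.F_subset_E phi'.F_subset_E unfolding agrees_with_F_def by blast

lemma U_preds_in_different_flows:
  "(u, v) \<in> U \<Longrightarrow> (u', v) \<in> U \<Longrightarrow> u \<noteq> u' \<Longrightarrow> (u, v) \<in> F \<longleftrightarrow> (u', v) \<notin> F"
  using phi.pred_unique[of u v u'] phi'.pred_unique[of u v u'] U_notin_F[of u v] U_notin_F[of u' v] by blast

lemma U_succs_in_different_flows: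
  "(v, w) \<in> U \<Longrightarrow> (v, w') \<in> U \<Longrightarrow> w \<noteq> w' \<Longrightarrow> (v, w) \<in> F \<longleftrightarrow> (v, w') \<notin> F"
  using phi.succ_unique[of v w w'] phi'.succ_unique[of v w w'] U_notin_F[of v w] U_notin_F[of v w'] by blast

lemma U_path_in_same_flow:
  "(u, v) \<in> U \<Longrightarrow> (v, w) \<in> U \<Longrightarrow> degU U v \<noteq> 4 \<Longrightarrow> (u, v) \<in> F \<longleftrightarrow> (v, w) \<in> F"
  using degU_eq_4_if_flows_cross by blast

text \<open>The invariant of a walk in the split graph: two consecutive steps either share the middle node
  of a vertex of U-degree at most two, or they are two U-edges entering (or two leaving) the same
  vertex, which then belong to different flows.\<close>

lemma agrees_with_F_split_step:
  assumes yx: "split_adj U y x" and xz: "split_adj U x z" and yz: "y \<noteq> z"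
  shows "agrees_with_F (fst y) (fst x) = agrees_with_F (fst x) (fst z)"
proof -
  obtain u w where uw: "(u, w) \<in> U"
    "(y = node U u True \<and> x = node U w False) \<or> (x = node U u True \<and> y = node U w False)"
    using yx unfolding split_adj_def by blast
  obtain u' w' where uw': "(u', w') \<in> U"
    "(x = node U u' True \<and> z = node U w' False) \<or> (z = node U u' True \<and> x = node U w' False)"
    using xz unfolding split_adj_def by blast
  note agrees = agrees_with_F_U_edge[OF uw(1)] agrees_with_F_U_edge[OF uw'(1)]
  from uw(2) uw'(2) consider
      (in_in) "y = node U u True" "x = node U w False" "z = node U u' True" "x = node U w' False"
    | (in_out) "y = node U u True" "x = node U w False" "x = node U u' True" "z = node U w' False"
    | (out_out) "x = node U u True" "y = node U w False" "x = node U u' True" "z = node U w' False"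
    | (out_in) "x = node U u True" "y = node U w False" "z = node U u' True" "x = node U w' False"
    by blast
  then show ?thesis
  proof cases
    case in_in
    then have "w = w'" "u \<noteq> u'" using node_eq_imp_eq yz by metis+
    then show ?thesis using in_in agrees U_preds_in_different_flows[OF uw(1)] uw'(1) by auto
  next
    case in_out
    then have "w = u'" using node_eq_imp_eq by metis
    moreover have "degU U w \<noteq> 4" using in_out node_True_eq_False_iff calculation by metis
    ultimately show ?thesis using in_out agrees U_path_in_same_flow[OF uw(1)] uw'(1) by auto
  next
    case out_out
    then have "u = u'" "w \<noteq> w'" using node_eq_imp_eq yz by metis+
    then show ?thesis using out_out agrees U_succs_in_different_flows[OF uw(1)] uw'(1) by auto
  next
    case out_in
    then have "u = w'" using node_eq_imp_eq by metis
    moreover have "degU U u \<noteq> 4" using out_in node_True_eq_False_iff calculation by metis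
    ultimately show ?thesis using out_in agrees U_path_in_same_flow[OF _ uw(1)] uw'(1) by auto
  qed
qed

lemma agrees_with_F_along_component_path:
  assumes xs: "split.component_path xs"
  shows "Suc i < length xs \<Longrightarrow>
    agrees_with_F (fst (xs ! i)) (fst (xs ! Suc i)) = agrees_with_F (fst (xs ! 0)) (fst (xs ! 1))"
proof (induction i)
  case (Suc i)
  have "split_adj U (xs ! i) (xs ! Suc i)" "split_adj U (xs ! Suc i) (xs ! Suc (Suc i))"
    using split.component_path_adj[OF xs] Suc.prems by auto
  moreover have "xs ! i \<noteq> xs ! Suc (Suc i)"
    using xs Suc.prems unfolding split.component_path_def by (simp add: nth_eq_iff_index_eq)
  ultimately show ?case using agrees_with_F_split_step Suc by fastforce
qed simp

text \<open>At an end vertex only one U-edge is present, and it belongs to the flow using that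
  source or sink.\<close>

lemma agrees_with_F_from_end:
  assumes v: "v \<in> D" and e: "(v, b) \<in> U \<or> (b, v) \<in> U"
  shows "agrees_with_F v b \<longleftrightarrow> v \<in> D_plus"
proof -
  from v D_subset consider "v \<in> R" | "v \<in> C" by auto
  then show ?thesis
  proof cases
    case 1
    then have e: "(v, b) \<in> U" using e U_subset_E phi.no_edge_into_R by blast
    have "v \<notin> T" "v \<notin> T'" using 1 phi.R_C_disjoint phi.T_subset_C phi'.T_subset_C by auto
    then have "v \<in> D_plus \<longleftrightarrow> v \<in> S" "v \<in> S \<longleftrightarrow> v \<notin> S'"
      using v unfolding D_def D_plus_def D_minus_def by auto
    moreover have "(v, b) \<in> F \<longleftrightarrow> v \<in> S"
      using phi.source_iff[OF 1] phi'.source_iff[OF 1] U_notin_F[OF e] calculation(2) by blast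
    ultimately show ?thesis using agrees_with_F_U_edge[OF e] by simp
  next
    case 2
    then have e: "(b, v) \<in> U" using e U_subset_E phi.no_edge_out_of_C by blast
    have "v \<notin> S" "v \<notin> S'" using 2 phi.R_C_disjoint phi.S_subset_R phi'.S_subset_R by auto
    then have "v \<in> D_plus \<longleftrightarrow> v \<in> T'" "v \<in> T \<longleftrightarrow> v \<notin> T'"
      using v unfolding D_def D_plus_def D_minus_def by auto
    moreover have "(b, v) \<in> F \<longleftrightarrow> v \<in> T"
      using phi.sink_iff[OF 2] phi'.sink_iff[OF 2] U_notin_F[OF e] calculation(2) by blast
    ultimately show ?thesis using agrees_with_F_U_edge[OF e] by simp
  qed
qed

lemma agrees_with_F_into_end:
  assumes v: "v \<in> D" and e: "(v, a) \<in> U \<or> (a, v) \<in> U"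
  shows "agrees_with_F a v \<longleftrightarrow> v \<in> D_minus"
proof -
  have "agrees_with_F a v \<longleftrightarrow> \<not> agrees_with_F v a"
    using e agrees_with_F_U_edge by blast
  then show ?thesis
    using agrees_with_F_from_end[OF v e] v D_plus_D_minus_disjoint unfolding D_def by blast
qed

lemma component_path_ends:
  assumes "split.component_path xs"
  shows "hd xs = (fst (hd xs), False) \<and> fst (hd xs) \<in> D \<and> last xs = (fst (last xs), False) \<and> fst (last xs) \<in> D"
  using assms unfolding split.component_path_def split_deg_1_iff by blast

definition oriented_paths :: "'v list set" where
  "oriented_paths = map fst ` {xs. split.component_path xs}"

lemma bij_betw_hd_oriented_paths: "bij_betw hd oriented_paths D"
proof (rule bij_betwI')
  fix P Q assume "P \<in> oriented_paths" "Q \<in> oriented_paths"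
  then obtain xs ys where xs: "split.component_path xs" "P = map fst xs"
    and ys: "split.component_path ys" "Q = map fst ys"
    unfolding oriented_paths_def by auto
  have "xs \<noteq> []" "ys \<noteq> []" using xs ys split.component_path_nonempty by auto
  show "hd P = hd Q \<longleftrightarrow> P = Q"
  proof
    assume "hd P = hd Q"
    then have "fst (hd xs) = fst (hd ys)" using xs ys \<open>xs \<noteq> []\<close> \<open>ys \<noteq> []\<close> by (simp add: hd_map)
    then have "hd xs = hd ys" using component_path_ends[OF xs(1)] component_path_ends[OF ys(1)] by metis
    then show "P = Q" using split.component_path_unique[OF xs(1) ys(1)] xs ys by simp
  qed simp
next
  fix P assume "P \<in> oriented_paths"
  then obtain xs where xs: "split.component_path xs" "P = map fst xs" unfolding oriented_paths_def by auto
  then show "hd P \<in> D" using component_path_ends[OF xs(1)] split.component_path_nonempty[OF xs(1)]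
    by (simp add: hd_map)
next
  fix v assume "v \<in> D"
  then have "split.deg (v, False) = 1" unfolding split_deg_1_iff by simp
  then obtain xs where xs: "split.component_path xs" "hd xs = (v, False)"
    using split.component_path_from_deg_1 by blast
  then have "hd (map fst xs) = v" using split.component_path_nonempty[OF xs(1)] by (simp add: hd_map)
  then show "\<exists>P\<in>oriented_paths. v = hd P" using xs unfolding oriented_paths_def by auto
qed

lemma rev_oriented_path:
  assumes "P \<in> oriented_paths"
  shows "rev P \<in> oriented_paths \<and> rev P \<noteq> P"
proof -
  obtain xs where xs: "split.component_path xs" "P = map fst xs"
    using assms unfolding oriented_paths_def by auto
  have "rev P = map fst (rev xs)" using xs by (simp add: rev_map)
  then have "rev P \<in> oriented_paths" using split.component_path_rev[OF xs(1)] unfolding oriented_paths_def by auto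
  moreover have "hd P \<noteq> last P"
  proof
    assume "hd P = last P"
    then have "fst (hd xs) = fst (last xs)"
      using xs split.component_path_nonempty[OF xs(1)] by (simp add: hd_map last_map)
    then have "hd xs = last xs" using component_path_ends[OF xs(1)] by metis
    then show False using split.component_path_hd_neq_last[OF xs(1)] by simp
  qed
  then have "rev P \<noteq> P" by (metis hd_rev)
  ultimately show ?thesis by simp
qed

lemma oriented_path_ends: "{v. \<exists>P\<in>oriented_paths. v = hd P \<or> v = last P} = D"
proof -
  have "last P = hd (rev P)" if "P \<in> oriented_paths" for P
    using that rev_oriented_path by (metis hd_rev rev_rev_ident)
  then show ?thesis
    using bij_betw_hd_oriented_paths rev_oriented_path unfolding bij_betw_def by blast
qed

lemma card_unoriented_paths: "2 * card ((\<lambda>P. {P, rev P}) ` oriented_paths) = card D"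
proof -
  let ?O = oriented_paths
  have fin: "finite ?O" using bij_betw_hd_oriented_paths finite_D bij_betw_finite by blast
  have "2 * card ((\<lambda>P. {P, rev P}) ` ?O) = card (\<Union> ((\<lambda>P. {P, rev P}) ` ?O))"
  proof (rule card_partition)
    show "\<And>c. c \<in> (\<lambda>P. {P, rev P}) ` ?O \<Longrightarrow> card c = 2"
      using rev_oriented_path by (auto simp: card_2_iff)
  qed (use fin in auto)
  also have "\<Union> ((\<lambda>P. {P, rev P}) ` ?O) = ?O" using rev_oriented_path by auto
  also have "card ?O = card D" using bij_betw_hd_oriented_paths by (rule bij_betw_same_card)
  finally show ?thesis .
qed

lemma oriented_path_step:
  assumes "P \<in> oriented_paths" and "(a, b) \<in> set (zip P (tl P))"
  shows "((a, b) \<in> U \<or> (b, a) \<in> U) \<and> agrees_with_F a b = agrees_with_F (P ! 0) (P ! 1)"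
proof -
  obtain xs where xs: "split.component_path xs" "P = map fst xs"
    using assms(1) unfolding oriented_paths_def by auto
  obtain i where i: "Suc i < length P" "P ! i = a" "P ! Suc i = b"
    using assms(2) by (auto simp: in_set_zip_tl_iff)
  moreover have "0 < length xs" "1 < length xs" using i xs(2) by auto
  ultimately have ab: "fst (xs ! i) = a" "fst (xs ! Suc i) = b" "P ! 0 = fst (xs ! 0)" "P ! 1 = fst (xs ! 1)"
    using xs(2) by auto
  have len: "Suc i < length xs" using i xs(2) by simp
  show ?thesis
    using split_adj_U_edge[OF split.component_path_adj[OF xs(1) len]]
      agrees_with_F_along_component_path[OF xs(1) len] ab by simp
qed

lemma oriented_path_agrees_with_F:
  assumes "P \<in> oriented_paths"
  shows "\<exists>s. \<forall>(a, b)\<in>set (zip P (tl P)).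
    ((a, b) \<in> F - F' \<longrightarrow> s) \<and> ((a, b) \<in> F' - F \<longrightarrow> \<not> s) \<and>
    ((b, a) \<in> F - F' \<longrightarrow> \<not> s) \<and> ((b, a) \<in> F' - F \<longrightarrow> s)"
proof -
  have "((a, b) \<in> F - F' \<longrightarrow> agrees_with_F (P ! 0) (P ! 1)) \<and>
    ((a, b) \<in> F' - F \<longrightarrow> \<not> agrees_with_F (P ! 0) (P ! 1)) \<and>
    ((b, a) \<in> F - F' \<longrightarrow> \<not> agrees_with_F (P ! 0) (P ! 1)) \<and>
    ((b, a) \<in> F' - F \<longrightarrow> agrees_with_F (P ! 0) (P ! 1))"
    if "(a, b) \<in> set (zip P (tl P))" for a b
  proof -
    have "agrees_with_F a b = agrees_with_F (P ! 0) (P ! 1)"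
      by (rule conjunct2[OF oriented_path_step[OF assms that]])
    then show ?thesis using agrees_with_F_cases[of a b] by (simp only:)
  qed
  then show ?thesis by (intro exI[of _ "agrees_with_F (P ! 0) (P ! 1)"]) auto
qed

lemma oriented_path_connects:
  assumes P: "P \<in> oriented_paths"
  shows "(hd P \<in> D_plus \<and> last P \<in> D_minus) \<or> (hd P \<in> D_minus \<and> last P \<in> D_plus)"
proof -
  define n where "n = length P"
  obtain xs where "split.component_path xs" "P = map fst xs"
    using P unfolding oriented_paths_def by auto
  then have n: "n \<ge> 2" unfolding split.component_path_def n_def by simp
  have ends: "hd P \<in> D" "last P \<in> D" using oriented_path_ends P by blast+
  have hd_last: "hd P = P ! 0" "last P = P ! (n - 1)"
    using n unfolding n_def by (cases P; simp add: hd_conv_nth last_conv_nth)+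
  have first: "(P ! 0, P ! 1) \<in> set (zip P (tl P))"
    using n unfolding in_set_zip_tl_iff n_def by (intro exI[of _ 0]) auto
  have "Suc (n - 2) = n - 1" using n by simp
  then have final: "(P ! (n - 2), P ! (n - 1)) \<in> set (zip P (tl P))"
    using n unfolding in_set_zip_tl_iff by (intro exI[of _ "n - 2"]) (auto simp: n_def)
  have "agrees_with_F (P ! 0) (P ! 1) \<longleftrightarrow> hd P \<in> D_plus"
    using oriented_path_step[OF P first] agrees_with_F_from_end[OF ends(1)] hd_last by simp
  moreover have "agrees_with_F (P ! 0) (P ! 1) \<longleftrightarrow> last P \<in> D_minus"
    using oriented_path_step[OF P final] agrees_with_F_into_end[OF ends(2)] hd_last by metis
  ultimately show ?thesis using ends D_plus_D_minus_disjoint unfolding D_def by blast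
qed

end

subsection \<open>SE-graphs and flows\<close>

lemma SE_graphD:
  assumes "SE_graph V E pos m n r c"
  shows "finite V" and "E \<subseteq> V \<times> V"
    and "\<forall>(u, v)\<in>E. (snd (pos u) = snd (pos v) \<and> fst (pos u) < fst (pos v)) \<or>
                 (fst (pos u) = fst (pos v) \<and> snd (pos u) > snd (pos v))"
    and "r ` {1..m} \<inter> c ` {1..n} = {}"
    and "\<forall>i\<in>{1..m}. \<forall>i'\<in>{1..m}. fst (pos (r i)) = fst (pos (r i')) \<and>
                                   (i < i' \<longrightarrow> snd (pos (r i)) < snd (pos (r i')))"
    and "\<forall>j\<in>{1..n}. \<forall>j'\<in>{1..n}. snd (pos (c j)) = snd (pos (c j')) \<and>
                                   (j < j' \<longrightarrow> fst (pos (c j)) < fst (pos (c j')))"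
    and "\<forall>i\<in>{1..m}. \<forall>(u, v)\<in>E. (u = r i \<or> v = r i) \<longrightarrow> snd (pos u) = snd (pos v)"
    and "\<forall>j\<in>{1..n}. \<forall>(u, v)\<in>E. (u = c j \<or> v = c j) \<longrightarrow> fst (pos u) = fst (pos v)"
    and "\<forall>v\<in>V. \<exists>i\<in>{1..m}. \<exists>j\<in>{1..n}. (r i, v) \<in> E\<^sup>* \<and> (v, c j) \<in> E\<^sup>*"
  by (insert assms, unfold SE_graph_def, (elim conjE, assumption)+)

lemma SE_graph_edge:
  assumes "SE_graph V E pos m n r c" and "(u, v) \<in> E"
  shows "(snd (pos u) = snd (pos v) \<and> fst (pos u) < fst (pos v)) \<or>
    (fst (pos u) = fst (pos v) \<and> snd (pos v) < snd (pos u))"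
  using SE_graphD(3)[OF assms(1)] assms(2) by fastforce

lemma SE_graph_rtrancl_monotone:
  assumes G: "SE_graph V E pos m n r c" and "(x, y) \<in> E\<^sup>*"
  shows "fst (pos x) \<le> fst (pos y) \<and> snd (pos y) \<le> snd (pos x)"
  using assms(2)
proof (induction rule: rtrancl_induct)
  case (step y z)
  then show ?case using SE_graph_edge[OF G step(2)] by linarith
qed simp

lemma SE_graph_E_asym:
  assumes "SE_graph V E pos m n r c" and "(a, b) \<in> E"
  shows "(b, a) \<notin> E"
  using SE_graph_edge[OF assms] SE_graph_edge[OF assms(1), of b a] by auto

lemma SE_graph_finite_E:
  assumes "SE_graph V E pos m n r c"
  shows "finite E"
  using SE_graphD(2)[OF assms] by (rule finite_subset) (simp add: SE_graphD(1)[OF assms])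

lemma SE_graph_sources_sinks_disjoint: "SE_graph V E pos m n r c \<Longrightarrow> r ` {1..m} \<inter> c ` {1..n} = {}"
  by (rule SE_graphD(4))

lemma SE_graph_inj_sources: "SE_graph V E pos m n r c \<Longrightarrow> inj_on r {1..m}"
  using SE_graphD(5) unfolding inj_on_def by (metis linorder_neqE_nat order_less_irrefl)

lemma SE_graph_inj_sinks: "SE_graph V E pos m n r c \<Longrightarrow> inj_on c {1..n}"
  using SE_graphD(6) unfolding inj_on_def by (metis linorder_neqE_nat order_less_irrefl)

text \<open>An edge into a source would be horizontal and come from the left, but every vertex is reached
  from a source, and all sources lie on one vertical line.\<close>

lemma SE_graph_no_edge_into_source:
  assumes G: "SE_graph V E pos m n r c" and i: "i \<in> {1..m}"
  shows "(a, r i) \<notin> E"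
proof
  assume e: "(a, r i) \<in> E"
  have "a \<in> V" using e SE_graphD(2)[OF G] by auto
  then obtain i' where i': "i' \<in> {1..m}" "(r i', a) \<in> E\<^sup>*" using SE_graphD(9)[OF G] by blast
  have "fst (pos (r i')) \<le> fst (pos a)" using SE_graph_rtrancl_monotone[OF G i'(2)] by simp
  moreover have "fst (pos (r i')) = fst (pos (r i))" using SE_graphD(5)[OF G] i i' by blast
  moreover have "snd (pos a) = snd (pos (r i))" using SE_graphD(7)[OF G] i e by fastforce
  ultimately show False using SE_graph_edge[OF G e] by linarith
qed

lemma SE_graph_no_edge_out_of_sink:
  assumes G: "SE_graph V E pos m n r c" and j: "j \<in> {1..n}"
  shows "(c j, b) \<notin> E"
proof
  assume e: "(c j, b) \<in> E"
  have "b \<in> V" using e SE_graphD(2)[OF G] by auto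
  then obtain j' where j': "j' \<in> {1..n}" "(b, c j') \<in> E\<^sup>*" using SE_graphD(9)[OF G] by blast
  have "snd (pos (c j')) \<le> snd (pos b)" using SE_graph_rtrancl_monotone[OF G j'(2)] by simp
  moreover have "snd (pos (c j')) = snd (pos (c j))" using SE_graphD(6)[OF G] j j' by blast
  moreover have "fst (pos b) = fst (pos (c j))" using SE_graphD(8)[OF G] j e by fastforce
  ultimately show False using SE_graph_edge[OF G e] by linarith
qed

lemma flow_edges_iff:
  "(a, b) \<in> flow_edges \<Phi> \<longleftrightarrow> (\<exists>P\<in>\<Phi>. \<exists>i. Suc i < length P \<and> P ! i = a \<and> P ! Suc i = b)"
  unfolding flow_edges_def path_edges_def UN_iff in_set_zip_tl_iff ..

lemma is_flowD:
  assumes "is_flow E r c I J \<Phi>"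
  shows "\<forall>P\<in>\<Phi>. dpath E P \<and> hd P \<in> r ` I \<and> last P \<in> c ` J"
    and "\<forall>P\<in>\<Phi>. \<forall>Q\<in>\<Phi>. P \<noteq> Q \<longrightarrow> set P \<inter> set Q = {}"
    and "r ` I \<subseteq> hd ` \<Phi>" and "c ` J \<subseteq> last ` \<Phi>"
  by (insert assms, unfold is_flow_def, (elim conjE, assumption)+)

context
  fixes E :: "('v \<times> 'v) set" and r c :: "nat \<Rightarrow> 'v" and I J :: "nat set" and \<Phi> :: "'v list set"
  assumes flow: "is_flow E r c I J \<Phi>"
begin

lemma flow_path: "P \<in> \<Phi> \<Longrightarrow> dpath E P \<and> hd P \<in> r ` I \<and> last P \<in> c ` J"
  using is_flowD(1)[OF flow] by blast

lemma flow_paths_disjoint: "P \<in> \<Phi> \<Longrightarrow> Q \<in> \<Phi> \<Longrightarrow> P \<noteq> Q \<Longrightarrow> set P \<inter> set Q = {}"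
  using is_flowD(2)[OF flow] by blast

lemma flow_path_nonempty: "P \<in> \<Phi> \<Longrightarrow> P \<noteq> []"
  using flow_path unfolding dpath_def by blast

lemma flow_vertex_unique:
  assumes "P \<in> \<Phi>" "Q \<in> \<Phi>" "i < length P" "j < length Q" "P ! i = Q ! j"
  shows "P = Q \<and> i = j"
proof -
  have "P ! i \<in> set P \<inter> set Q" using assms by (metis IntI nth_mem)
  then have "P = Q" using flow_paths_disjoint assms(1,2) by blast
  then show ?thesis using assms flow_path[of P] unfolding dpath_def by (simp add: nth_eq_iff_index_eq)
qed

lemma flow_edges_subset: "flow_edges \<Phi> \<subseteq> E"
proof
  fix e assume "e \<in> flow_edges \<Phi>"
  then obtain P i where "P \<in> \<Phi>" "Suc i < length P" "e = (P ! i, P ! Suc i)"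
    by (cases e) (auto simp: flow_edges_iff)
  then show "e \<in> E" using flow_path[of P] unfolding dpath_def by (auto intro: successively_nth)
qed

lemma flow_edges_pred_unique:
  assumes "(a, v) \<in> flow_edges \<Phi>" and "(a', v) \<in> flow_edges \<Phi>"
  shows "a = a'"
proof -
  obtain P i where P: "P \<in> \<Phi>" "Suc i < length P" "P ! i = a" "P ! Suc i = v"
    using assms(1) unfolding flow_edges_iff by blast
  obtain Q j where Q: "Q \<in> \<Phi>" "Suc j < length Q" "Q ! j = a'" "Q ! Suc j = v"
    using assms(2) unfolding flow_edges_iff by blast
  have "P = Q \<and> Suc i = Suc j" using flow_vertex_unique[of P Q "Suc i" "Suc j"] P Q by simp
  then show ?thesis using P Q by simp
qed

lemma flow_edges_succ_unique:
  assumes "(v, b) \<in> flow_edges \<Phi>" and "(v, b') \<in> flow_edges \<Phi>"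
  shows "b = b'"
proof -
  obtain P i where P: "P \<in> \<Phi>" "Suc i < length P" "P ! i = v" "P ! Suc i = b"
    using assms(1) unfolding flow_edges_iff by blast
  obtain Q j where Q: "Q \<in> \<Phi>" "Suc j < length Q" "Q ! j = v" "Q ! Suc j = b'"
    using assms(2) unfolding flow_edges_iff by blast
  have "P = Q \<and> i = j" using flow_vertex_unique[of P Q i j] P Q by simp
  then show ?thesis using P Q by simp
qed

lemma flow_edges_in_if_out:
  assumes "(v, b) \<in> flow_edges \<Phi>" and "v \<notin> r ` I"
  shows "\<exists>a. (a, v) \<in> flow_edges \<Phi>"
proof -
  obtain P i where P: "P \<in> \<Phi>" "Suc i < length P" "P ! i = v"
    using assms(1) unfolding flow_edges_iff by blast
  have "P ! 0 \<in> r ` I" using flow_path[OF P(1)] flow_path_nonempty[OF P(1)] by (simp add: hd_conv_nth)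
  then have "i \<noteq> 0" using P(3) assms(2) by auto
  then obtain i' where i': "i = Suc i'" by (cases i) auto
  then have "Suc i' < length P" using P(2) by simp
  then have "(P ! i', P ! Suc i') \<in> flow_edges \<Phi>" using P(1) unfolding flow_edges_iff by blast
  then show ?thesis using P(3) i' by auto
qed

lemma flow_edges_out_if_in:
  assumes "(a, v) \<in> flow_edges \<Phi>" and "v \<notin> c ` J"
  shows "\<exists>b. (v, b) \<in> flow_edges \<Phi>"
proof -
  obtain P i where P: "P \<in> \<Phi>" "Suc i < length P" "P ! Suc i = v"
    using assms(1) unfolding flow_edges_iff by blast
  have "P ! (length P - 1) \<in> c ` J"
    using flow_path[OF P(1)] flow_path_nonempty[OF P(1)] by (simp add: last_conv_nth)
  then have "Suc i \<noteq> length P - 1" using P(3) assms(2) by auto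
  then have "Suc (Suc i) < length P" using P(2) by linarith
  then have "(v, P ! Suc (Suc i)) \<in> flow_edges \<Phi>" using P unfolding flow_edges_iff by auto
  then show ?thesis ..
qed

lemma flow_path_length_ge_2:
  assumes "r ` I \<inter> c ` J = {}" and "P \<in> \<Phi>"
  shows "Suc 0 < length P"
proof -
  have "hd P \<in> r ` I" "last P \<in> c ` J" using flow_path[OF assms(2)] by simp_all
  then have "hd P \<noteq> last P" using assms(1) by (metis IntI empty_iff)
  then show ?thesis using flow_path_nonempty[OF assms(2)] by (cases P) auto
qed

lemma flow_edges_out_of_source:
  assumes disj: "r ` I \<inter> c ` J = {}" and v: "v \<in> r ` I"
  shows "\<exists>b. (v, b) \<in> flow_edges \<Phi>"
proof -
  obtain P where P: "P \<in> \<Phi>" "v = P ! 0"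
    using v is_flowD(3)[OF flow] flow_path_nonempty by (force simp: hd_conv_nth)
  then have "(v, P ! 1) \<in> flow_edges \<Phi>"
    using flow_path_length_ge_2[OF disj P(1)] unfolding flow_edges_iff by auto
  then show ?thesis ..
qed

lemma flow_edges_into_sink:
  assumes disj: "r ` I \<inter> c ` J = {}" and v: "v \<in> c ` J"
  shows "\<exists>a. (a, v) \<in> flow_edges \<Phi>"
proof -
  obtain P where P: "P \<in> \<Phi>" "v = P ! (length P - 1)"
    using v is_flowD(4)[OF flow] flow_path_nonempty by (force simp: last_conv_nth)
  moreover have "Suc (length P - 2) = length P - 1" "Suc (length P - 2) < length P"
    using flow_path_length_ge_2[OF disj P(1)] by auto
  ultimately have "(P ! (length P - 2), v) \<in> flow_edges \<Phi>"
    unfolding flow_edges_iff by (metis (no_types))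
  then show ?thesis ..
qed

end

lemma SE_flow_edge_set:
  assumes G: "SE_graph V E pos m n r c" and IJ: "pairs_E m n I J" and flow: "is_flow E r c I J \<Phi>"
  shows "flow_edge_set E (flow_edges \<Phi>) (r ` {1..m}) (c ` {1..n}) (r ` I) (c ` J)"
proof -
  have sub: "r ` I \<subseteq> r ` {1..m}" "c ` J \<subseteq> c ` {1..n}" using IJ unfolding pairs_E_def by auto
  have RC: "r ` {1..m} \<inter> c ` {1..n} = {}" by (rule SE_graph_sources_sinks_disjoint[OF G])
  then have IJ_disj: "r ` I \<inter> c ` J = {}" using sub by blast
  have no_in: "v \<in> r ` {1..m} \<Longrightarrow> (a, v) \<notin> E" for v a using SE_graph_no_edge_into_source[OF G] by blast
  have no_out: "v \<in> c ` {1..n} \<Longrightarrow> (v, b) \<notin> E" for v b using SE_graph_no_edge_out_of_sink[OF G] by blast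
  note F_E = flow_edges_subset[OF flow]
  show ?thesis
  proof
    show "finite E" by (rule SE_graph_finite_E[OF G])
    show "(a, b) \<in> E \<Longrightarrow> (b, a) \<notin> E" for a b by (rule SE_graph_E_asym[OF G])
    show "v \<in> r ` {1..m} \<Longrightarrow> (\<exists>b. (v, b) \<in> flow_edges \<Phi>) \<longleftrightarrow> v \<in> r ` I" for v
      using flow_edges_in_if_out[OF flow, of v] flow_edges_out_of_source[OF flow IJ_disj, of v] no_in F_E
      by blast
    show "v \<in> c ` {1..n} \<Longrightarrow> (\<exists>a. (a, v) \<in> flow_edges \<Phi>) \<longleftrightarrow> v \<in> c ` J" for v
      using flow_edges_out_if_in[OF flow, of _ v] flow_edges_into_sink[OF flow IJ_disj, of v] no_out F_E
      by blast
    show "v \<notin> r ` {1..m} \<Longrightarrow> v \<notin> c ` {1..n} \<Longrightarrow>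
        (\<exists>a. (a, v) \<in> flow_edges \<Phi>) \<longleftrightarrow> (\<exists>b. (v, b) \<in> flow_edges \<Phi>)" for v
      using flow_edges_out_if_in[OF flow, of _ v] flow_edges_in_if_out[OF flow, of v] sub by blast
    show "finite (r ` {1..m})" "finite (c ` {1..n})" by simp_all
    show "(a, v) \<in> flow_edges \<Phi> \<Longrightarrow> (a', v) \<in> flow_edges \<Phi> \<Longrightarrow> a = a'" for a v a'
      by (rule flow_edges_pred_unique[OF flow])
    show "(v, b) \<in> flow_edges \<Phi> \<Longrightarrow> (v, b') \<in> flow_edges \<Phi> \<Longrightarrow> b = b'" for v b b'
      by (rule flow_edges_succ_unique[OF flow])
  qed (fact F_E no_in no_out RC sub)+
qed

lemma card_image_Un_image:
  assumes "inj_on r A" "inj_on c B" "r ` A \<inter> c ` B = {}" "X \<subseteq> A" "Y \<subseteq> B" "finite X" "finite Y"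
  shows "card (r ` X \<union> c ` Y) = card X + card Y"
proof -
  have "card (r ` X) = card X" "card (c ` Y) = card Y"
    using assms by (auto intro: card_image inj_on_subset)
  moreover have "r ` X \<inter> c ` Y = {}" using assms by blast
  ultimately show ?thesis using assms by (simp add: card_Un_disjoint)
qed

locale SE_double_flow =
  fixes V :: "'v set" and E :: "('v \<times> 'v) set" and pos :: "'v \<Rightarrow> real \<times> real"
    and m n :: nat and r c :: "nat \<Rightarrow> 'v"
    and I J I' J' :: "nat set" and \<Phi> \<Phi>' :: "'v list set"
  assumes G: "SE_graph V E pos m n r c"
    and IJ: "pairs_E m n I J" and IJ': "pairs_E m n I' J'"
    and flow: "is_flow E r c I J \<Phi>" and flow': "is_flow E r c I' J' \<Phi>'"
begin

sublocale double_flow E "flow_edges \<Phi>" "flow_edges \<Phi>'" "r ` {1..m}" "c ` {1..n}"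
    "r ` I" "c ` J" "r ` I'" "c ` J'"
  using SE_flow_edge_set[OF G IJ flow] SE_flow_edge_set[OF G IJ' flow'] by (rule double_flow.intro)

lemma oriented_exchange_paths_eq: "oriented_exchange_paths \<Phi> \<Phi>' = oriented_paths"
  unfolding oriented_exchange_paths_def oriented_paths_def U_def[symmetric] split_component_path_iff
  by blast

lemma D_plus_eq: "D_plus = r ` (I - I') \<union> c ` (J' - J)"
  and D_minus_eq: "D_minus = r ` (I' - I) \<union> c ` (J - J')"
proof -
  have "r ` I - r ` I' = r ` (I - I')" "r ` I' - r ` I = r ` (I' - I)"
    "c ` J - c ` J' = c ` (J - J')" "c ` J' - c ` J = c ` (J' - J)"
    using IJ IJ' inj_on_image_set_diff[OF SE_graph_inj_sources[OF G]]
      inj_on_image_set_diff[OF SE_graph_inj_sinks[OF G]]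
    unfolding pairs_E_def by (metis Diff_subset subset_trans)+
  then show "D_plus = r ` (I - I') \<union> c ` (J' - J)" "D_minus = r ` (I' - I) \<union> c ` (J - J')"
    unfolding D_plus_def D_minus_def by simp_all
qed

lemma card_D: "card D = card (I - I') + card (I' - I) + card (J - J') + card (J' - J)"
proof -
  have sub: "I - I' \<subseteq> {1..m}" "I' - I \<subseteq> {1..m}" "J - J' \<subseteq> {1..n}" "J' - J \<subseteq> {1..n}"
    using IJ IJ' unfolding pairs_E_def by auto
  have "card D = card D_plus + card D_minus"
    using finite_D D_plus_D_minus_disjoint unfolding D_def by (simp add: card_Un_disjoint)
  also have "\<dots> = card (I - I') + card (I' - I) + card (J - J') + card (J' - J)"
    unfolding D_plus_eq D_minus_eq
    using card_image_Un_image[OF SE_graph_inj_sources[OF G] SE_graph_inj_sinks[OF G]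
        SE_graph_sources_sinks_disjoint[OF G]] sub
    by (simp add: finite_subset)
  finally show ?thesis .
qed

lemma card_exchange_paths:
  "real (card (exchange_paths \<Phi> \<Phi>')) = real (card (I - I') + card (I' - I) + card (J - J') + card (J' - J)) / 2"
proof -
  have "2 * card (exchange_paths \<Phi> \<Phi>') = card (I - I') + card (I' - I) + card (J - J') + card (J' - J)"
    unfolding exchange_paths_def oriented_exchange_paths_eq card_unoriented_paths card_D ..
  then show ?thesis by (simp flip: of_nat_add)
qed

lemma exchange_path_ends:
  "{v. \<exists>P\<in>oriented_exchange_paths \<Phi> \<Phi>'. v = hd P \<or> v = last P}
    = r ` ((I - I') \<union> (I' - I)) \<union> c ` ((J - J') \<union> (J' - J))"
  unfolding oriented_exchange_paths_eq oriented_path_ends D_def D_plus_eq D_minus_eq by auto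

lemma exchange_path_connects:
  "\<forall>P\<in>oriented_exchange_paths \<Phi> \<Phi>'.
     let conn = (\<lambda>A B. (hd P \<in> A \<and> last P \<in> B) \<or> (hd P \<in> B \<and> last P \<in> A)) in
     conn (r ` (I - I')) (r ` (I' - I)) \<or> conn (c ` (J - J')) (c ` (J' - J)) \<or>
     conn (r ` (I - I')) (c ` (J - J')) \<or> conn (r ` (I' - I)) (c ` (J' - J))"
proof
  fix P assume "P \<in> oriented_exchange_paths \<Phi> \<Phi>'"
  then have "(hd P \<in> r ` (I - I') \<union> c ` (J' - J) \<and> last P \<in> r ` (I' - I) \<union> c ` (J - J')) \<or>
      (hd P \<in> r ` (I' - I) \<union> c ` (J - J') \<and> last P \<in> r ` (I - I') \<union> c ` (J' - J))"
    using oriented_path_connects unfolding oriented_exchange_paths_eq D_plus_eq D_minus_eq by blast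
  then show "let conn = (\<lambda>A B. (hd P \<in> A \<and> last P \<in> B) \<or> (hd P \<in> B \<and> last P \<in> A)) in
     conn (r ` (I - I')) (r ` (I' - I)) \<or> conn (c ` (J - J')) (c ` (J' - J)) \<or>
     conn (r ` (I - I')) (c ` (J - J')) \<or> conn (r ` (I' - I)) (c ` (J' - J))"
    unfolding Let_def Un_iff by argo
qed

lemma exchange_path_orientation:
  "\<forall>P\<in>oriented_exchange_paths \<Phi> \<Phi>'. \<exists>s::bool.
     \<forall>(a, b)\<in>set (zip P (tl P)).
       ((a, b) \<in> flow_edges \<Phi> - flow_edges \<Phi>' \<longrightarrow> s) \<and>
       ((a, b) \<in> flow_edges \<Phi>' - flow_edges \<Phi> \<longrightarrow> \<not> s) \<and>
       ((b, a) \<in> flow_edges \<Phi> - flow_edges \<Phi>' \<longrightarrow> \<not> s) \<and>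
       ((b, a) \<in> flow_edges \<Phi>' - flow_edges \<Phi> \<longrightarrow> s)"
  using oriented_path_agrees_with_F unfolding oriented_exchange_paths_eq by blast

end

theorem lemma4p1:
  fixes V :: "'v set" and E :: "('v \<times> 'v) set" and pos :: "'v \<Rightarrow> real \<times> real"
    and m n :: nat and r c :: "nat \<Rightarrow> 'v"
    and I J I' J' :: "nat set" and \<Phi> \<Phi>' :: "'v list set"
  assumes G: "SE_graph V E pos m n r c"
    and IJ: "pairs_E m n I J" and IJ': "pairs_E m n I' J'"
    and phi: "is_flow E r c I J \<Phi>" and phi': "is_flow E r c I' J' \<Phi>'"
  defines "Io \<equiv> I - I'" and "Ib \<equiv> I' - I" and "Jo \<equiv> J - J'" and "Jb \<equiv> J' - J"
    and "k \<equiv> card (exchange_paths \<Phi> \<Phi>')"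
  shows "real k = real (card Io + card Ib + card Jo + card Jb) / 2
    \<and> {v. \<exists>P\<in>oriented_exchange_paths \<Phi> \<Phi>'. v = hd P \<or> v = last P}
        = r ` (Io \<union> Ib) \<union> c ` (Jo \<union> Jb)
    \<and> (\<forall>P\<in>oriented_exchange_paths \<Phi> \<Phi>'.
         let conn = (\<lambda>A B. (hd P \<in> A \<and> last P \<in> B) \<or> (hd P \<in> B \<and> last P \<in> A)) in
         conn (r ` Io) (r ` Ib) \<or> conn (c ` Jo) (c ` Jb) \<or>
         conn (r ` Io) (c ` Jo) \<or> conn (r ` Ib) (c ` Jb))
    \<and> (\<forall>P\<in>oriented_exchange_paths \<Phi> \<Phi>'. \<exists>s::bool.
         \<forall>(a,b)\<in>set (zip P (tl P)).
           ((a,b) \<in> flow_edges \<Phi> - flow_edges \<Phi>' \<longrightarrow> s) \<and>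
           ((a,b) \<in> flow_edges \<Phi>' - flow_edges \<Phi> \<longrightarrow> \<not> s) \<and>
           ((b,a) \<in> flow_edges \<Phi> - flow_edges \<Phi>' \<longrightarrow> \<not> s) \<and>
           ((b,a) \<in> flow_edges \<Phi>' - flow_edges \<Phi> \<longrightarrow> s))"
proof -
  interpret SE_double_flow V E pos m n r c I J I' J' \<Phi> \<Phi>'
    by (rule SE_double_flow.intro[OF G IJ IJ' phi phi'])
  show ?thesis
    unfolding k_def Io_def Ib_def Jo_def Jb_def
    by (intro conjI card_exchange_paths exchange_path_ends exchange_path_connects exchange_path_orientation)
qed

end
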